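(* Consider any execution of Algorithm A with $m=n$ registers. Suppose that at time $\tau$ all entries of $\mathit{REG}$ equal a quadruplet $X$ with $X.\mathit{lvl}=\mathtt{up}$ and $X.\mathit{cfl}=\mathtt{false}$, and that at some time $\tau'$ all entries of $\mathit{REG}$ equal a quadruplet $Y$ with $Y.rd\ge X.rd$. Then $Y.\mathit{val}=X.\mathit{val}$.
   Context: Quadruplets, lexicographic order: a quadruplet is $\langle rd,\mathit{lvl},\mathit{cfl},\mathit{val}\rangle$ with $rd\in\mathbb{N}$, $\mathit{lvl}\in\{\mathtt{down}<\mathtt{up}\}$, $\mathit{cfl}\in\{\mathtt{false}<\mathtt{true}\}$, $\mathit{val}$ in a totally ordered value set with a least default $\bot$; quadruplets are totally ordered lexicographically. For a nonempty finite set $T$ of quadruplets with lexicographic maximum $\langle r,\ell,c,v\rangle$, $\mathrm{sup}(T)=\langle r,\ell,\mathit{conflict}(T),v\rangle$ where $\mathit{conflict}(T)$ holds iff some element of $T$ of round $r$ has conflict field $\mathtt{true}$, or the elements of $T$ of round $r$ carry at least two distinct values. Model and Algorithm A: $n$ anonymous asynchronous processes (any number may crash) share an atomic snapshot object $\mathit{REG}[1..m]$ of multi-writer registers, each initially $\langle 0,\mathtt{down},\mathtt{false},\bot\rangle$, with atomic operations $\mathrm{snapshot}()$ and $\mathrm{write}(x,X)$; executions are interleavings of atomic steps, one per time instant. A process proposing $v$ repeats forever: $\mathit{view}\leftarrow\mathrm{snapshot}()$; then (1) if all entries equal $\langle r,\mathtt{up},\mathtt{false},w\rangle$ with $r>0$,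 it returns (decides) $w$; (2) else if all entries equal $\langle r,\mathtt{down},\mathtt{false},w\rangle$ with $r>0$, it writes $\langle r+1,\mathtt{up},\mathtt{false},w\rangle$ into $\mathit{REG}[1]$; (3) else if all entries equal $\langle r,\ell,\mathtt{true},w\rangle$ with $r>0$, it writes $\langle r+1,\mathtt{down},\mathtt{false},w\rangle$ into $\mathit{REG}[1]$; (4) otherwise it computes $S=\mathrm{sup}(\{\mathit{view}[1],\dots,\mathit{view}[m],\langle 1,\mathtt{down},\mathtt{false},v\rangle\})$, lets $x$ be the smallest index with $\mathit{view}[x]\neq S$, and writes $S$ into $\mathit{REG}[x]$. *)

theory Defs
  imports Main "HOL-Library.Product_Lexorder"
begin

datatype lvl = Down | Up

datatype 'v quad = Q (rd: nat) (lv: lvl) (cfl: bool) (val: 'v)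

text \<open>Lexicographic order: rd, then lvl (Down < Up), then cfl (false < true), then val.\<close>
definition qkey :: "'v quad \<Rightarrow> nat \<times> bool \<times> bool \<times> 'v" where
  "qkey q = (rd q, lv q = Up, cfl q, val q)"

definition qle :: "'v::linorder quad \<Rightarrow> 'v quad \<Rightarrow> bool" where
  "qle a b \<longleftrightarrow> qkey a \<le> qkey b"

definition lexmax :: "'v::linorder quad set \<Rightarrow> 'v quad" where
  "lexmax T = (THE q. q \<in> T \<and> (\<forall>t\<in>T. qle t q))"

definition conflict :: "'v::linorder quad set \<Rightarrow> bool" where
  "conflict T \<longleftrightarrow> (let r = rd (lexmax T) in
     (\<exists>t\<in>T. rd t = r \<and> cfl t) \<or>
     (\<exists>t1\<in>T. \<exists>t2\<in>T. rd t1 = r \<and> rd t2 = r \<and> val t1 \<noteq> val t2))"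

definition qsup :: "'v::linorder quad set \<Rightarrow> 'v quad" where
  "qsup T = (let M = lexmax T in Q (rd M) (lv M) (conflict T) (val M))"

text \<open>Local state of a process: about to take a snapshot, about to perform a pending
  write of a quadruplet into a register, or decided (returned).\<close>
datatype 'v pstate = Snap | Wr nat "'v quad" | Decided 'v

type_synonym 'v config = "(nat \<Rightarrow> 'v quad) \<times> (nat \<Rightarrow> 'v pstate)"

definition init_quad :: "'v::{linorder,order_bot} quad" where
  "init_quad = Q 0 Down False bot"

definition init_config :: "'v::{linorder,order_bot} config" where
  "init_config = ((\<lambda>_. init_quad), (\<lambda>_. Snap))"

definition after_snap :: "nat \<Rightarrow> 'v::linorder \<Rightarrow> (nat \<Rightarrow> 'v quad) \<Rightarrow> 'v pstate" where
  "after_snap m v view =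
    (if \<exists>r w. r > 0 \<and> (\<forall>k\<in>{1..m}. view k = Q r Up False w) then
       Decided (SOME w. \<exists>r. r > 0 \<and> (\<forall>k\<in>{1..m}. view k = Q r Up False w))
     else if \<exists>r w. r > 0 \<and> (\<forall>k\<in>{1..m}. view k = Q r Down False w) then
       (let (r, w) = (SOME p. fst p > 0 \<and> (\<forall>k\<in>{1..m}. view k = Q (fst p) Down False (snd p)))
        in Wr 1 (Q (r + 1) Up False w))
     else if \<exists>r l w. r > 0 \<and> (\<forall>k\<in>{1..m}. view k = Q r l True w) then
       (let (r, w) = (SOME p. fst p > 0 \<and> (\<exists>l. \<forall>k\<in>{1..m}. view k = Q (fst p) l True (snd p)))
        in Wr 1 (Q (r + 1) Down False w))
     else
       (let S = qsup (view ` {1..m} \<union> {Q 1 Down False v});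
            x = (LEAST x. x \<in> {1..m} \<and> view x \<noteq> S)
        in Wr x S))"

definition pstep :: "nat \<Rightarrow> 'v::linorder \<Rightarrow> nat \<Rightarrow> 'v config \<Rightarrow> 'v config" where
  "pstep m v i c =
    (let (mem, pc) = c in
     case pc i of
       Snap \<Rightarrow> (mem, pc(i := after_snap m v mem))
     | Wr x X \<Rightarrow> (mem(x := X), pc(i := Snap))
     | Decided w \<Rightarrow> (mem, pc))"

text \<open>Crashed processes are simply never scheduled again; any finite execution is a prefix of
  such a sequence.  \<open>C t\<close> is the configuration at time \<open>t\<close>.\<close>
definition execution :: "nat \<Rightarrow> nat \<Rightarrow> (nat \<Rightarrow> 'v::{linorder,order_bot}) \<Rightarrow> (nat \<Rightarrow> 'v config) \<Rightarrow> bool" where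
  "execution n m prop C \<longleftrightarrow>
     C 0 = init_config \<and>
     (\<forall>t. \<exists>i\<in>{1..n}. C (Suc t) = pstep m (prop i) i (C t))"

definition all_regs_eq :: "nat \<Rightarrow> 'v config \<Rightarrow> 'v quad \<Rightarrow> bool" where
  "all_regs_eq m c X \<longleftrightarrow> (\<forall>k\<in>{1..m}. fst c k = X)"

end

theory Submission
  imports Defs
begin

text \<open>Say that \<open>q\<close> supersedes \<open>Z\<close> if \<open>q \<ge> Z\<close> and \<open>q\<close>, when of the round of \<open>Z\<close>, flags a
  conflict or carries the value of \<open>Z\<close>. A write computed from a snapshot containing a register
  that supersedes \<open>Z\<close> supersedes \<open>Z\<close> again. So once all registers hold \<open>Z\<close>, the registers
  superseding \<open>Z\<close> forever outnumber the processes about to write a quadruplet that does not,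
  since a pending write overwrites only one register; in particular every later uniform register
  content supersedes \<open>Z\<close>.

  Moreover, a quadruplet of round \<open>r + 1 \<ge> 2\<close>, or of level up, can only have been produced by
  rule (2) or (3) at a moment when all registers held a quadruplet of round \<open>r\<close> with the same
  value (rule (4) merely recombines existing rounds, levels and values). A uniform \<open>Y\<close> of the
  round of \<open>X\<close> then has the value of \<open>X\<close>: if it precedes \<open>X\<close>, then \<open>X\<close> supersedes it and has no
  conflict; if it follows \<open>X\<close>, it is up, and its conflict-free down predecessor agrees with that
  of \<open>X\<close> because one supersedes the other. Later rounds follow by induction along the chain of
  uniform predecessors.\<close>

lemma qkey_inj:
  assumes "qkey a = qkey b"
  shows "a = b"
proof -
  have "lv a = lv b"
    using assms by (cases "lv a"; cases "lv b") (auto simp: qkey_def)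
  with assms show ?thesis
    by (cases a; cases b) (auto simp: qkey_def)
qed

lemma qle_refl: "qle a a"
  by (simp add: qle_def)

lemma qle_trans: "qle a b \<Longrightarrow> qle b c \<Longrightarrow> qle a c"
  unfolding qle_def by (rule order_trans)

lemma qle_antisym: "qle a b \<Longrightarrow> qle b a \<Longrightarrow> a = b"
  unfolding qle_def by (rule qkey_inj) (rule antisym)

lemma qle_imp_rd_le: "qle a b \<Longrightarrow> rd a \<le> rd b"
  by (auto simp: qle_def qkey_def)

lemma rd_less_imp_qle: "rd a < rd b \<Longrightarrow> qle a b"
  by (auto simp: qle_def qkey_def)

lemma lexmax_greatest:
  assumes "finite T" "T \<noteq> {}"
  shows "lexmax T \<in> T" "\<forall>t\<in>T. qle t (lexmax T)"
proof -
  have "Max (qkey ` T) \<in> qkey ` T"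
    using assms by simp
  then obtain q where q: "q \<in> T" "qkey q = Max (qkey ` T)"
    by auto
  then have greatest: "\<forall>t\<in>T. qle t q"
    using assms by (auto simp: qle_def)
  have "lexmax T = q"
    unfolding lexmax_def using q greatest by (blast intro: qle_antisym)
  with q greatest show "lexmax T \<in> T" "\<forall>t\<in>T. qle t (lexmax T)" by auto
qed

lemma rd_qsup [simp]: "rd (qsup T) = rd (lexmax T)"
  and lv_qsup [simp]: "lv (qsup T) = lv (lexmax T)"
  and val_qsup [simp]: "val (qsup T) = val (lexmax T)"
  by (simp_all add: qsup_def Let_def)

definition supersedes :: "'v::linorder quad \<Rightarrow> 'v quad \<Rightarrow> bool" where
  "supersedes Z q \<longleftrightarrow> qle Z q \<and> (rd q = rd Z \<longrightarrow> cfl q \<or> val q = val Z)"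

lemma supersedes_refl: "supersedes Z Z"
  by (simp add: supersedes_def qle_refl)

lemma supersedes_imp_rd_le: "supersedes Z q \<Longrightarrow> rd Z \<le> rd q"
  by (simp add: supersedes_def qle_imp_rd_le)

lemma supersedes_if_rd_less: "rd Z < rd q \<Longrightarrow> supersedes Z q"
  by (simp add: supersedes_def rd_less_imp_qle)

text \<open>An element of the maximal round whose value differs from the maximum's sets the conflict
  flag of the supremum.\<close>
lemma qsup_supersedes:
  assumes "finite T" "G \<in> T" "supersedes Z G"
  shows "supersedes Z (qsup T)"
proof -
  define M where "M = lexmax T"
  have M: "M \<in> T" "qle G M"
    using lexmax_greatest[of T] assms(1,2) by (auto simp: M_def)
  have sup: "qsup T = Q (rd M) (lv M) (conflict T) (val M)"
    by (simp add: qsup_def M_def Let_def)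
  have "cfl M \<Longrightarrow> conflict T"
    using M(1) by (auto simp: conflict_def M_def Let_def)
  then have "qle M (qsup T)"
    by (auto simp: sup qle_def qkey_def le_bool_def)
  with M(2) assms(3) have "qle Z (qsup T)"
    by (meson supersedes_def qle_trans)
  moreover have "cfl (qsup T) \<or> val (qsup T) = val Z" if same_round: "rd (qsup T) = rd Z"
  proof -
    have "rd Z \<le> rd G" "rd G \<le> rd M"
      using assms(3) M(2) by (simp_all add: supersedes_imp_rd_le qle_imp_rd_le)
    then have rd_G: "rd G = rd M" "rd G = rd Z"
      using same_round by (simp_all add: sup)
    show ?thesis
    proof (cases "cfl G \<or> val M \<noteq> val G")
      case True
      then have "conflict T"
        using assms(2) M(1) rd_G unfolding conflict_def M_def Let_def by metis
      then show ?thesis by (simp add: sup)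
    next
      case False
      then show ?thesis
        using assms(3) rd_G by (auto simp: sup supersedes_def)
    qed
  qed
  ultimately show ?thesis
    by (simp add: supersedes_def)
qed

lemma after_snap_write_cases:
  assumes "after_snap m v view = Wr x S"
  obtains (promote) r w where "r > 0" "\<forall>k\<in>{1..m}. view k = Q r Down False w"
      "S = Q (r + 1) Up False w"
  | (restart) r l w where "r > 0" "\<forall>k\<in>{1..m}. view k = Q r l True w"
      "S = Q (r + 1) Down False w"
  | (adopt) "S = qsup (view ` {1..m} \<union> {Q 1 Down False v})"
proof (cases "\<exists>r w. r > 0 \<and> (\<forall>k\<in>{1..m}. view k = Q r Up False w)")
  case True
  have "after_snap m v view = Decided (SOME w. \<exists>r. r > 0 \<and> (\<forall>k\<in>{1..m}. view k = Q r Up False w))"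
    unfolding after_snap_def using True by (rule if_P)
  with assms show thesis
    by simp
next
  case no_up: False
  show thesis
  proof (cases "\<exists>r w. r > 0 \<and> (\<forall>k\<in>{1..m}. view k = Q r Down False w)")
    case True
    let ?down = "\<lambda>p. fst p > 0 \<and> (\<forall>k\<in>{1..m}. view k = Q (fst p) Down False (snd p))"
    obtain r w where rw: "(SOME p. ?down p) = (r, w)"
      by (cases "SOME p. ?down p")
    have "\<exists>p. ?down p"
      using True by auto
    then have "?down (SOME p. ?down p)"
      by (rule someI_ex)
    then have "r > 0" "\<forall>k\<in>{1..m}. view k = Q r Down False w"
      unfolding rw by simp_all
    moreover have "Wr x S = Wr 1 (Q (r + 1) Up False w)"
      unfolding assms[symmetric] after_snap_def if_not_P[OF no_up] if_P[OF True] rw by simp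
    ultimately show thesis
      by (intro promote[of r w]) simp_all
  next
    case no_down: False
    show thesis
    proof (cases "\<exists>r l w. r > 0 \<and> (\<forall>k\<in>{1..m}. view k = Q r l True w)")
      case True
      let ?conflict = "\<lambda>p. fst p > 0 \<and> (\<exists>l. \<forall>k\<in>{1..m}. view k = Q (fst p) l True (snd p))"
      obtain r w where rw: "(SOME p. ?conflict p) = (r, w)"
        by (cases "SOME p. ?conflict p")
      have "\<exists>p. ?conflict p"
        using True by auto
      then have "?conflict (SOME p. ?conflict p)"
        by (rule someI_ex)
      then obtain l where "r > 0" "\<forall>k\<in>{1..m}. view k = Q r l True w"
        unfolding rw by auto
      moreover have "Wr x S = Wr 1 (Q (r + 1) Down False w)"
        unfolding assms[symmetric] after_snap_def if_not_P[OF no_up] if_not_P[OF no_down]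
          if_P[OF True] rw by simp
      ultimately show thesis
        by (intro restart[of r l w]) simp_all
    next
      case False
      have "Wr x S = Wr (LEAST y. y \<in> {1..m} \<and> view y \<noteq> qsup (view ` {1..m} \<union> {Q 1 Down False v}))
          (qsup (view ` {1..m} \<union> {Q 1 Down False v}))"
        unfolding assms[symmetric] after_snap_def if_not_P[OF no_up] if_not_P[OF no_down]
          if_not_P[OF False] Let_def by (rule refl)
      then show thesis
        by (intro adopt) simp
    qed
  qed
qed

lemma after_snap_supersedes:
  assumes "k \<in> {1..m}" "supersedes Z (view k)" "after_snap m v view = Wr x S"
  shows "supersedes Z S"
  using assms(3)
proof (cases rule: after_snap_write_cases)
  case (promote r w)
  then have "rd Z < rd S"
    using supersedes_imp_rd_le[OF assms(2)] assms(1) by simp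
  then show ?thesis
    by (rule supersedes_if_rd_less)
next
  case (restart r l w)
  then have "rd Z < rd S"
    using supersedes_imp_rd_le[OF assms(2)] assms(1) by simp
  then show ?thesis
    by (rule supersedes_if_rd_less)
next
  case adopt
  show ?thesis
    unfolding adopt using assms(1,2) by (intro qsup_supersedes[of _ "view k"]) auto
qed

lemma after_snap_write_preserves:
  fixes P :: "'v::linorder quad \<Rightarrow> bool"
  assumes regs: "\<forall>k. P (view k)" and proposal: "P (Q 1 Down False v)"
    and fields: "\<And>q q'. P q \<Longrightarrow> rd q' = rd q \<Longrightarrow> lv q' = lv q \<Longrightarrow> val q' = val q \<Longrightarrow> P q'"
    and promote: "\<And>r w. r > 0 \<Longrightarrow> \<forall>k\<in>{1..m}. view k = Q r Down False w \<Longrightarrow> P (Q (r + 1) Up False w)"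
    and restart: "\<And>r l w. r > 0 \<Longrightarrow> \<forall>k\<in>{1..m}. view k = Q r l True w \<Longrightarrow> P (Q (r + 1) Down False w)"
    and step: "after_snap m v view = Wr x S"
  shows "P S"
  using step
proof (cases rule: after_snap_write_cases)
  case adopt
  define T where "T = view ` {1..m} \<union> {Q 1 Down False v}"
  have "lexmax T \<in> T"
    using lexmax_greatest(1)[of T] by (simp add: T_def)
  then have "P (lexmax T)"
    using regs proposal by (auto simp: T_def)
  then have "P (qsup T)"
    by (rule fields) simp_all
  with adopt show ?thesis
    by (simp add: T_def)
qed (use promote restart in blast)+

lemma pstep_Snap [simp]: "pc i = Snap \<Longrightarrow> pstep m v i (mem, pc) = (mem, pc(i := after_snap m v mem))"
  by (simp add: pstep_def)

lemma pstep_Wr [simp]: "pc i = Wr x S \<Longrightarrow> pstep m v i (mem, pc) = (mem(x := S), pc(i := Snap))"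
  by (simp add: pstep_def)

lemma pstep_Decided [simp]: "pc i = Decided w \<Longrightarrow> pstep m v i (mem, pc) = (mem, pc)"
  by (simp add: pstep_def)

lemma execution_init: "execution n m props C \<Longrightarrow> C 0 = init_config"
  by (simp add: execution_def)

lemma execution_step:
  assumes "execution n m props C"
  obtains i where "i \<in> {1..n}" "C (Suc t) = pstep m (props i) i (C t)"
  using assms unfolding execution_def by blast

lemma execution_processes_nonempty:
  assumes "execution n m props C"
  shows "1 \<le> n"
proof -
  obtain i where "i \<in> {1..n}"
    by (rule execution_step[OF assms, where t = 0])
  then show ?thesis
    by simp
qed

lemma all_regs_eq_first: "all_regs_eq n c Y \<Longrightarrow> 1 \<le> n \<Longrightarrow> fst c 1 = Y"
  by (simp add: all_regs_eq_def)

definition superseding_regs :: "nat \<Rightarrow> (nat \<Rightarrow> 'v::linorder quad) \<Rightarrow> 'v quad \<Rightarrow> nat set" where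
  "superseding_regs n mem Z = {k \<in> {1..n}. supersedes Z (mem k)}"

definition stale_writers :: "nat \<Rightarrow> (nat \<Rightarrow> 'v::linorder pstate) \<Rightarrow> 'v quad \<Rightarrow> nat set" where
  "stale_writers n pc Z = {i \<in> {1..n}. \<exists>x S. pc i = Wr x S \<and> \<not> supersedes Z S}"

definition locked :: "nat \<Rightarrow> 'v::linorder quad \<Rightarrow> 'v config \<Rightarrow> bool" where
  "locked n Z c \<longleftrightarrow> card (stale_writers n (snd c) Z) < card (superseding_regs n (fst c) Z)"

lemma superseding_regs_uniform: "all_regs_eq n c Z \<Longrightarrow> superseding_regs n (fst c) Z = {1..n}"
  by (auto simp: superseding_regs_def all_regs_eq_def supersedes_refl)

lemma finite_superseding_regs [simp]: "finite (superseding_regs n mem Z)"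
  by (simp add: superseding_regs_def)

lemma finite_stale_writers [simp]: "finite (stale_writers n pc Z)"
  by (simp add: stale_writers_def)

lemma locked_write:
  assumes "locked n Z (mem, pc)" "i \<in> {1..n}" "pc i = Wr x S"
  shows "locked n Z (mem(x := S), pc(i := Snap))"
proof (cases "supersedes Z S")
  case True
  have "stale_writers n (pc(i := Snap)) Z \<subseteq> stale_writers n pc Z"
    by (auto simp: stale_writers_def)
  moreover have "superseding_regs n mem Z \<subseteq> superseding_regs n (mem(x := S)) Z"
    using True by (auto simp: superseding_regs_def)
  ultimately have "card (stale_writers n (pc(i := Snap)) Z) \<le> card (stale_writers n pc Z)"
    "card (superseding_regs n mem Z) \<le> card (superseding_regs n (mem(x := S)) Z)"
    by (simp_all add: card_mono)
  with assms(1) show ?thesis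
    by (simp add: locked_def)
next
  case False
  let ?stale = "stale_writers n pc Z" and ?regs = "superseding_regs n mem Z"
  have "i \<in> ?stale"
    using assms(2,3) False by (simp add: stale_writers_def)
  then have "card (?stale - {i}) < card ?stale"
    by (rule card_Diff1_less[OF finite_stale_writers])
  moreover have "stale_writers n (pc(i := Snap)) Z \<subseteq> ?stale - {i}"
    by (auto simp: stale_writers_def)
  then have "card (stale_writers n (pc(i := Snap)) Z) \<le> card (?stale - {i})"
    by (rule card_mono[rotated]) simp
  moreover have "card ?regs - 1 \<le> card (?regs - {x})"
    by (cases "x \<in> ?regs") simp_all
  moreover have "?regs - {x} \<subseteq> superseding_regs n (mem(x := S)) Z"
    by (auto simp: superseding_regs_def)
  then have "card (?regs - {x}) \<le> card (superseding_regs n (mem(x := S)) Z)"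
    by (rule card_mono[rotated]) simp
  ultimately show ?thesis
    using assms(1) by (simp add: locked_def)
qed

lemma locked_step:
  assumes "locked n Z c" "i \<in> {1..n}"
  shows "locked n Z (pstep n v i c)"
proof -
  obtain mem pc where c: "c = (mem, pc)"
    by (cases c)
  show ?thesis
  proof (cases "pc i")
    case Snap
    have "superseding_regs n mem Z \<noteq> {}"
      using assms(1) by (auto simp: locked_def c)
    then obtain k where "k \<in> {1..n}" "supersedes Z (mem k)"
      by (auto simp: superseding_regs_def)
    then have "\<forall>x S. after_snap n v mem = Wr x S \<longrightarrow> supersedes Z S"
      using after_snap_supersedes by blast
    then have "stale_writers n (pc(i := after_snap n v mem)) Z \<subseteq> stale_writers n pc Z"
      by (auto simp: stale_writers_def)
    then have "card (stale_writers n (pc(i := after_snap n v mem)) Z) \<le> card (stale_writers n pc Z)"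
      by (rule card_mono[rotated]) (simp add: stale_writers_def)
    with assms(1) Snap show ?thesis
      by (simp add: locked_def c)
  next
    case (Wr x S)
    with assms show ?thesis
      by (simp add: c locked_write)
  next
    case (Decided w)
    with assms show ?thesis
      by (simp add: c)
  qed
qed

lemma locked_at_uniform:
  assumes ex: "execution n n props C"
  shows "all_regs_eq n (C t) Z \<Longrightarrow> locked n Z (C t)"
proof (induction t)
  case 0
  have "stale_writers n (snd (C 0)) Z = {}"
    by (simp add: execution_init[OF ex] init_config_def stale_writers_def)
  with 0 execution_processes_nonempty[OF ex] show ?case
    by (simp add: locked_def superseding_regs_uniform)
next
  case (Suc t)
  obtain i where i: "i \<in> {1..n}" and step: "C (Suc t) = pstep n (props i) i (C t)"
    by (rule execution_step[OF ex])
  obtain mem pc where c: "C t = (mem, pc)"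
    by (cases "C t")
  show ?case
  proof (cases "\<exists>x S. pc i = Wr x S")
    case True
    then obtain x S where "pc i = Wr x S"
      by blast
    with step c have "snd (C (Suc t)) i = Snap"
      by simp
    then have "stale_writers n (snd (C (Suc t))) Z \<subseteq> {1..n} - {i}"
      by (auto simp: stale_writers_def)
    then have "card (stale_writers n (snd (C (Suc t))) Z) \<le> card ({1..n} - {i})"
      by (rule card_mono[rotated]) simp
    also have "\<dots> < n"
      using i by simp
    finally show ?thesis
      using Suc.prems
      by (simp add: locked_def superseding_regs_uniform)
  next
    case False
    then have "fst (C (Suc t)) = mem"
      using step c by (cases "pc i") simp_all
    then have "all_regs_eq n (C t) Z"
      using Suc.prems c by (simp add: all_regs_eq_def)
    with Suc.IH step i show ?thesis
      by (simp add: locked_step)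
  qed
qed

lemma locked_persists:
  assumes ex: "execution n n props C" and "locked n Z (C t0)" "t0 \<le> t"
  shows "locked n Z (C t)"
  using assms(3,2)
proof (induction t rule: dec_induct)
  case (step t)
  obtain i where "i \<in> {1..n}" "C (Suc t) = pstep n (props i) i (C t)"
    by (rule execution_step[OF ex])
  with step show ?case
    by (simp add: locked_step)
qed

lemma uniform_supersedes_later:
  assumes ex: "execution n n props C"
    and "all_regs_eq n (C t0) Z" "t0 \<le> t" "all_regs_eq n (C t) Y"
  shows "supersedes Z Y"
proof -
  have "locked n Z (C t)"
    using locked_at_uniform[OF ex assms(2)] by (rule locked_persists[OF ex _ assms(3)])
  then have "superseding_regs n (fst (C t)) Z \<noteq> {}"
    by (auto simp: locked_def)
  then obtain k where "k \<in> {1..n}" "supersedes Z (fst (C t) k)"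
    by (auto simp: superseding_regs_def)
  with assms(4) show ?thesis
    by (simp add: all_regs_eq_def)
qed

text \<open>The first disjunct covers the initial registers and the round-1 proposals.\<close>
definition justified :: "nat \<Rightarrow> (nat \<Rightarrow> 'v config) \<Rightarrow> 'v quad \<Rightarrow> bool" where
  "justified n C q \<longleftrightarrow> (rd q \<le> 1 \<and> lv q = Down) \<or>
     (\<exists>t Z. all_regs_eq n (C t) Z \<and> rd Z + 1 = rd q \<and> val Z = val q \<and>
        (lv q = Up \<longrightarrow> lv Z = Down \<and> \<not> cfl Z) \<and> (lv q = Down \<longrightarrow> cfl Z))"

lemma justified_cong:
  "justified n C q \<Longrightarrow> rd q' = rd q \<Longrightarrow> lv q' = lv q \<Longrightarrow> val q' = val q \<Longrightarrow> justified n C q'"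
  unfolding justified_def by metis

lemma justified_invariant:
  assumes ex: "execution n n props C"
  shows "(\<forall>k. justified n C (fst (C t) k)) \<and> (\<forall>i x S. snd (C t) i = Wr x S \<longrightarrow> justified n C S)"
proof (induction t)
  case 0
  show ?case
    by (simp add: execution_init[OF ex] init_config_def init_quad_def justified_def)
next
  case (Suc t)
  obtain i where step: "C (Suc t) = pstep n (props i) i (C t)"
    by (rule execution_step[OF ex])
  obtain mem pc where c: "C t = (mem, pc)"
    by (cases "C t")
  have regs: "\<forall>k. justified n C (mem k)" and writes: "\<And>j x S. pc j = Wr x S \<Longrightarrow> justified n C S"
    using Suc.IH c by auto
  show ?case
  proof (cases "pc i")
    case Snap
    have "justified n C S" if "after_snap n (props i) mem = Wr x S" for x S
    proof (rule after_snap_write_preserves[OF regs _ justified_cong _ _ that])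
      show "justified n C (Q 1 Down False (props i))"
        by (simp add: justified_def)
      show "justified n C (Q (r + 1) Up False w)"
        if "\<forall>k\<in>{1..n}. mem k = Q r Down False w" for r w
        using that c unfolding justified_def all_regs_eq_def by (intro disjI2 exI[of _ t]) auto
      show "justified n C (Q (r + 1) Down False w)"
        if "\<forall>k\<in>{1..n}. mem k = Q r l True w" for r l w
        using that c unfolding justified_def all_regs_eq_def by (intro disjI2 exI[of _ t]) auto
    qed
    with regs writes Snap step c show ?thesis
      by simp
  next
    case (Wr x S)
    with regs writes step c show ?thesis
      by auto
  next
    case (Decided w)
    with regs writes step c show ?thesis
      by simp
  qed
qed

lemma uniform_predecessor:
  assumes ex: "execution n n props C" and Y: "all_regs_eq n (C t) Y"
    and "lv Y = Up \<or> 2 \<le> rd Y"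
  obtains t0 Z where "all_regs_eq n (C t0) Z" "rd Z + 1 = rd Y" "val Z = val Y"
    "lv Y = Up \<Longrightarrow> lv Z = Down \<and> \<not> cfl Z"
proof -
  have "justified n C (fst (C t) 1)"
    using justified_invariant[OF ex] by blast
  then have "justified n C Y"
    using all_regs_eq_first[OF Y execution_processes_nonempty[OF ex]] by simp
  with assms(3) that show thesis
    unfolding justified_def by auto
qed

lemma uniform_same_round_agree:
  assumes ex: "execution n n props C"
    and Z1: "all_regs_eq n (C t1) Z1" and Z2: "all_regs_eq n (C t2) Z2"
    and "rd Z1 = rd Z2" "\<not> cfl Z1" "\<not> cfl Z2"
  shows "val Z1 = val Z2"
proof (cases "t1 \<le> t2")
  case True
  then have "supersedes Z1 Z2"
    by (rule uniform_supersedes_later[OF ex Z1 _ Z2])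
  with assms(4,6) show ?thesis
    by (simp add: supersedes_def)
next
  case False
  then have "supersedes Z2 Z1"
    by (intro uniform_supersedes_later[OF ex Z2 _ Z1]) simp
  with assms(4,5) show ?thesis
    by (simp add: supersedes_def)
qed

lemma up_uniform_same_round_val:
  assumes ex: "execution n n props C"
    and X: "all_regs_eq n (C \<tau>) X" "lv X = Up" "\<not> cfl X"
    and Y: "all_regs_eq n (C \<tau>') Y" "rd Y = rd X"
  shows "val Y = val X"
proof (cases "\<tau>' \<le> \<tau>")
  case True
  then have "supersedes Y X"
    by (rule uniform_supersedes_later[OF ex Y(1) _ X(1)])
  with X(3) Y(2) show ?thesis
    by (simp add: supersedes_def)
next
  case False
  then have "supersedes X Y"
    by (intro uniform_supersedes_later[OF ex X(1) _ Y(1)]) simp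
  with X(2) Y(2) have "lv Y = Up"
    by (auto simp: supersedes_def qle_def qkey_def)
  obtain t1 Z1 where Z1: "all_regs_eq n (C t1) Z1" "rd Z1 + 1 = rd X" "val Z1 = val X"
    "lv Z1 = Down" "\<not> cfl Z1"
    by (rule uniform_predecessor[OF ex X(1) disjI1[OF X(2)]]) (use X(2) in auto)
  obtain t2 Z2 where Z2: "all_regs_eq n (C t2) Z2" "rd Z2 + 1 = rd Y" "val Z2 = val Y"
    "lv Z2 = Down" "\<not> cfl Z2"
    by (rule uniform_predecessor[OF ex Y(1) disjI1[OF \<open>lv Y = Up\<close>]])
      (use \<open>lv Y = Up\<close> in auto)
  have "val Z1 = val Z2"
    using Z1 Z2 Y(2) by (intro uniform_same_round_agree[OF ex Z1(1) Z2(1)]) simp_all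
  with Z1(3) Z2(3) show ?thesis
    by simp
qed

theorem lemma10:
  fixes n :: nat and props :: "nat \<Rightarrow> 'v::{linorder,order_bot}"
    and C :: "nat \<Rightarrow> 'v config" and X Y :: "'v quad" and \<tau> \<tau>' :: nat
  assumes "execution n n props C"
    and "all_regs_eq n (C \<tau>) X" and "lv X = Up" and "cfl X = False"
    and "all_regs_eq n (C \<tau>') Y" and "rd Y \<ge> rd X"
  shows "val Y = val X"
proof -
  note ex = assms(1) and X = assms(2-4)
  have "1 \<le> rd X"
    by (rule uniform_predecessor[OF ex X(1) disjI1[OF X(2)]]) simp
  have "val Y' = val X" if "all_regs_eq n (C t') Y'" "rd Y' = rd X + k" for k t' Y'
    using that
  proof (induction k arbitrary: t' Y')
    case 0
    with X show ?case
      by (intro up_uniform_same_round_val[OF ex]) simp_all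
  next
    case (Suc k)
    have "2 \<le> rd Y'"
      using Suc.prems(2) \<open>1 \<le> rd X\<close> by simp
    then obtain t'' Z' where "all_regs_eq n (C t'') Z'" "rd Z' + 1 = rd Y'" "val Z' = val Y'"
      by (rule uniform_predecessor[OF ex Suc.prems(1) disjI2]) simp
    with Suc.IH Suc.prems(2) show ?case
      by simp
  qed
  with assms(5,6) show ?thesis
    by (metis le_add_diff_inverse)
qed

end
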